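(* Let $k\ge1$, $G=(V,E)$ an inductively $k$-independent graph with $k$-independence ordering $v_1,\dots,v_n$, $f:2^V\to\mathbb{R}_{\ge0}$ monotone submodular with $f(\emptyset)=0$, and $\beta>0$. Run algorithm PREEMPTIVE-GREEDY (described in the context), let $S_{\mathrm{out}}$ be its output and $U$ the set of all vertices ever contained in $S$ during the run. Then for every independent set $T$ of $G$, \[ f(U\cup T)-f(U)\le k(1+\beta)(1+\beta^{-1})\,f(S_{\mathrm{out}}). \]
   Context: $N(v)$ is the neighbourhood of $v$ (excluding $v$); $G$ is inductively $k$-independent with $k$-independence ordering $v_1,\dots,v_n$ if for every $i$, $G[N(v_i)\cap\{v_i,\dots,v_n\}]$ has no independent set of size more than $k$. Order $V$ by $v_1<\dots<v_n$. For $S\subseteq V$: $f_S(v)=f(S\cup\{v\})-f(S)$, and $\nu_f(S,u)=f_{S'}(u)$ where $S'=\{s\in S:s<u\}$. Algorithm PREEMPTIVE-GREEDY (parameter $\beta>0$): start with $S=\emptyset$; for $i=1,\dots,n$: let $C_i=N(v_i)\cap S$; if $f_S(v_i)\ge(1+\beta)\sum_{u\in C_i}\nu_f(S,u)$, replace $S$ by $(S\setminus C_i)\cup\{v_i\}$. Return the final $S$ as $S_{\mathrm{out}}$. *)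

theory Defs
  imports Main "HOL-Analysis.Analysis"
begin

text \<open>Simple graphs on a finite vertex set: an edge relation E, symmetric,
irreflexive, with all edges inside the vertex set. The vertex ordering
v_1,...,v_n is a distinct list vs with set vs = V.\<close>

definition simple_graph :: "'a set \<Rightarrow> ('a \<Rightarrow> 'a \<Rightarrow> bool) \<Rightarrow> bool" where
  "simple_graph V E \<longleftrightarrow> (\<forall>u w. E u w \<longrightarrow> u \<in> V \<and> w \<in> V \<and> E w u \<and> u \<noteq> w)"

definition nbhd :: "('a \<Rightarrow> 'a \<Rightarrow> bool) \<Rightarrow> 'a \<Rightarrow> 'a set" where
  "nbhd E v = {u. E v u}"

definition indep_set :: "('a \<Rightarrow> 'a \<Rightarrow> bool) \<Rightarrow> 'a set \<Rightarrow> bool" where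
  "indep_set E A \<longleftrightarrow> (\<forall>u\<in>A. \<forall>w\<in>A. \<not> E u w)"

definition k_indep_ordering :: "('a \<Rightarrow> 'a \<Rightarrow> bool) \<Rightarrow> nat \<Rightarrow> 'a list \<Rightarrow> bool" where
  "k_indep_ordering E k vs \<longleftrightarrow>
     (\<forall>i < length vs. \<forall>A. A \<subseteq> nbhd E (vs ! i) \<inter> set (drop i vs) \<longrightarrow> indep_set E A \<longrightarrow> card A \<le> k)"

definition monotone_set_fun :: "'a set \<Rightarrow> ('a set \<Rightarrow> real) \<Rightarrow> bool" where
  "monotone_set_fun V f \<longleftrightarrow> (\<forall>A B. A \<subseteq> B \<longrightarrow> B \<subseteq> V \<longrightarrow> f A \<le> f B)"

definition submodular :: "'a set \<Rightarrow> ('a set \<Rightarrow> real) \<Rightarrow> bool" where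
  "submodular V f \<longleftrightarrow> (\<forall>A B. A \<subseteq> V \<longrightarrow> B \<subseteq> V \<longrightarrow> f (A \<union> B) + f (A \<inter> B) \<le> f A + f B)"

definition ord_less :: "'a list \<Rightarrow> 'a \<Rightarrow> 'a \<Rightarrow> bool" where
  "ord_less vs a b \<longleftrightarrow> (\<exists>i j. i < j \<and> j < length vs \<and> vs ! i = a \<and> vs ! j = b)"

definition marg :: "('a set \<Rightarrow> real) \<Rightarrow> 'a set \<Rightarrow> 'a \<Rightarrow> real" where
  "marg f S v = f (S \<union> {v}) - f S"

definition nu :: "'a list \<Rightarrow> ('a set \<Rightarrow> real) \<Rightarrow> 'a set \<Rightarrow> 'a \<Rightarrow> real" where
  "nu vs f S u = marg f {s \<in> S. ord_less vs s u} u"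

definition pg_step :: "'a list \<Rightarrow> ('a \<Rightarrow> 'a \<Rightarrow> bool) \<Rightarrow> ('a set \<Rightarrow> real) \<Rightarrow> real \<Rightarrow> 'a set \<Rightarrow> 'a \<Rightarrow> 'a set" where
  "pg_step vs E f \<beta> S v =
     (let C = nbhd E v \<inter> S in
      if marg f S v \<ge> (1 + \<beta>) * (\<Sum>u\<in>C. nu vs f S u) then (S - C) \<union> {v} else S)"

fun pg_states :: "'a list \<Rightarrow> ('a \<Rightarrow> 'a \<Rightarrow> bool) \<Rightarrow> ('a set \<Rightarrow> real) \<Rightarrow> real \<Rightarrow> 'a set \<Rightarrow> 'a list \<Rightarrow> 'a set list" where
  "pg_states vs E f \<beta> S [] = [S]"
| "pg_states vs E f \<beta> S (w # ws) = S # pg_states vs E f \<beta> (pg_step vs E f \<beta> S w) ws"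

definition pg_output :: "'a list \<Rightarrow> ('a \<Rightarrow> 'a \<Rightarrow> bool) \<Rightarrow> ('a set \<Rightarrow> real) \<Rightarrow> real \<Rightarrow> 'a set" where
  "pg_output vs E f \<beta> = last (pg_states vs E f \<beta> {} vs)"

definition pg_union :: "'a list \<Rightarrow> ('a \<Rightarrow> 'a \<Rightarrow> bool) \<Rightarrow> ('a set \<Rightarrow> real) \<Rightarrow> real \<Rightarrow> 'a set" where
  "pg_union vs E f \<beta> = \<Union> (set (pg_states vs E f \<beta> {} vs))"

end

theory Submission
  imports Defs
begin

(*
  Telescoping along the ordering, f S = f {} + (sum over u in S of nu(S, u)), and submodularity
  makes nu(S, u) grow while u stays in S and later vertices come and go.  Give every vertex that
  ever enters S the weight nu(S, u) for the last S containing it.  An accepted vertex v raises f by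
  at least marg f S v minus the nu-values it evicts, hence by beta times those evicted values; so
  the evicted weight is at most f(S_out) / beta and the total weight at most (1 + 1/beta) f(S_out).
  A vertex t of T outside U was rejected, so marg f U t < (1 + beta) times the weight of its
  conflicts, which are earlier neighbours of t.  As T is independent, k-independence of the
  ordering lets each vertex be charged by at most k vertices of T.
*)

lemma marg_nonneg:
  assumes "monotone_set_fun V f" and "A \<subseteq> V" and "v \<in> V"
  shows "0 \<le> marg f A v"
proof -
  have "f A \<le> f (A \<union> {v})"
    using assms unfolding monotone_set_fun_def by blast
  then show ?thesis
    unfolding marg_def by simp
qed

lemma marg_antimono:
  assumes mono: "monotone_set_fun V f" and submod: "submodular V f"
    and "A \<subseteq> B" and "B \<subseteq> V" and "v \<in> V"
  shows "marg f B v \<le> marg f A v"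
proof (cases "v \<in> B")
  case True
  then have "marg f B v = 0"
    by (simp add: marg_def insert_absorb)
  with marg_nonneg[OF mono] assms show ?thesis
    by auto
next
  case False
  have "A \<union> {v} \<subseteq> V"
    using assms by blast
  then have "f ((A \<union> {v}) \<union> B) + f ((A \<union> {v}) \<inter> B) \<le> f (A \<union> {v}) + f B"
    using submod \<open>B \<subseteq> V\<close> unfolding submodular_def by blast
  moreover have "(A \<union> {v}) \<inter> B = A" and "(A \<union> {v}) \<union> B = B \<union> {v}"
    using assms False by auto
  ultimately show ?thesis
    unfolding marg_def by simp
qed

lemma diff_union_le_sum_marg:
  assumes mono: "monotone_set_fun V f" and submod: "submodular V f"
    and "finite A" and "A \<subseteq> V" and B: "B \<subseteq> V"
  shows "f (B \<union> A) - f B \<le> (\<Sum>t\<in>A. marg f B t)"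
  using \<open>finite A\<close> \<open>A \<subseteq> V\<close>
proof (induction A rule: finite_induct)
  case empty
  then show ?case by simp
next
  case (insert a A)
  have "f (B \<union> insert a A) - f (B \<union> A) = marg f (B \<union> A) a"
    unfolding marg_def by (simp add: insert_commute)
  also have "\<dots> \<le> marg f B a"
    using marg_antimono[OF mono submod, of B "B \<union> A" a] insert B by auto
  finally show ?case
    using insert by simp
qed

lemma sum_sum_le_bounded_multiplicity:
  fixes g :: "'b \<Rightarrow> real"
  assumes "finite A" and "finite B" and "\<And>a. a \<in> A \<Longrightarrow> R a \<subseteq> B"
    and "\<And>b. b \<in> B \<Longrightarrow> 0 \<le> g b" and "\<And>b. b \<in> B \<Longrightarrow> card {a \<in> A. b \<in> R a} \<le> k"
  shows "(\<Sum>a\<in>A. \<Sum>b\<in>R a. g b) \<le> k * (\<Sum>b\<in>B. g b)"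
proof -
  have "(\<Sum>a\<in>A. \<Sum>b\<in>R a. g b) = (\<Sum>a\<in>A. \<Sum>b\<in>{b \<in> B. b \<in> R a}. g b)"
    using assms(3) by (intro sum.cong) auto
  also have "\<dots> = (\<Sum>b\<in>B. card {a \<in> A. b \<in> R a} * g b)"
    using sum.swap_restrict[OF assms(1,2), of "\<lambda>a b. g b" "\<lambda>a b. b \<in> R a"] by simp
  also have "\<dots> \<le> (\<Sum>b\<in>B. k * g b)"
    using assms(4,5) by (intro sum_mono mult_right_mono) auto
  finally show ?thesis
    by (simp add: sum_distrib_left)
qed

lemma nth_in_set_take_iff:
  assumes "distinct xs" and "i < length xs"
  shows "xs ! i \<in> set (take j xs) \<longleftrightarrow> i < j"
  using assms by (auto simp: in_set_conv_nth nth_eq_iff_index_eq)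

lemma in_set_take_nth:
  assumes "x \<in> set (take j xs)"
  obtains i where "i < j" and "i < length xs" and "x = xs ! i"
  using assms unfolding in_set_conv_nth by (metis length_take min_less_iff_conj nth_take)

lemma ord_less_nth_iff:
  assumes "distinct vs" and "j < length vs"
  shows "ord_less vs s (vs ! j) \<longleftrightarrow> s \<in> set (take j vs)"
  using assms unfolding ord_less_def
  by (auto simp: in_set_conv_nth nth_eq_iff_index_eq) blast

lemma nu_nth:
  assumes "distinct vs" and "j < length vs"
  shows "nu vs f S (vs ! j) = marg f (S \<inter> set (take j vs)) (vs ! j)"
  unfolding nu_def ord_less_nth_iff[OF assms] by (simp add: Int_def conj_commute)

lemma f_eq_sum_nu:
  assumes "distinct vs" and "S \<subseteq> set vs"
  shows "f S = f {} + (\<Sum>u\<in>S. nu vs f S u)"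
proof -
  have "f (S \<inter> set (take m vs)) = f {} + (\<Sum>u\<in>S \<inter> set (take m vs). nu vs f S u)"
    if "m \<le> length vs" for m
    using that
  proof (induction m)
    case 0
    then show ?case by simp
  next
    case (Suc m)
    then have m: "m < length vs" by simp
    have take_Suc: "set (take (Suc m) vs) = insert (vs ! m) (set (take m vs))"
      by (simp add: take_Suc_conv_app_nth[OF m])
    show ?case
    proof (cases "vs ! m \<in> S")
      case True
      have "vs ! m \<notin> set (take m vs)"
        using nth_in_set_take_iff[OF assms(1) m] by simp
      then show ?thesis
        using True Suc nu_nth[OF assms(1) m, of f S]
        by (simp add: take_Suc marg_def)
    next
      case False
      then show ?thesis
        using Suc by (simp add: take_Suc)
    qed
  qed
  from this[of "length vs"] assms(2) show ?thesis
    by (simp add: Int_absorb2)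
qed

lemma pg_states_nth:
  "i \<le> length ws \<Longrightarrow> pg_states vs E f \<beta> S ws ! i = foldl (pg_step vs E f \<beta>) S (take i ws)"
proof (induction ws arbitrary: S i)
  case (Cons w ws)
  then show ?case by (cases i) auto
qed simp

lemma length_pg_states: "length (pg_states vs E f \<beta> S ws) = Suc (length ws)"
  by (induction ws arbitrary: S) auto

lemma last_pg_states: "last (pg_states vs E f \<beta> S ws) = foldl (pg_step vs E f \<beta>) S ws"
  using pg_states_nth[of "length ws" ws vs E f \<beta> S] length_pg_states[of vs E f \<beta> S ws]
  by (metis diff_Suc_1 last_conv_nth list.size(3) nat.distinct(1) order_refl take_all)

lemma set_pg_states:
  "set (pg_states vs E f \<beta> S ws) = (\<lambda>i. foldl (pg_step vs E f \<beta>) S (take i ws)) ` {..length ws}"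
  by (auto simp: set_conv_nth length_pg_states pg_states_nth less_Suc_eq_le image_iff)
    (metis pg_states_nth)

locale preemptive_greedy =
  fixes E :: "'a \<Rightarrow> 'a \<Rightarrow> bool" and vs :: "'a list"
    and f :: "'a set \<Rightarrow> real" and \<beta> :: real
  assumes distinct: "distinct vs"
    and mono: "monotone_set_fun (set vs) f" and submod: "submodular (set vs) f"
    and f_empty: "f {} = 0" and beta_pos: "\<beta> > 0"
begin

lemma nu_nonneg: "S \<subseteq> set vs \<Longrightarrow> u \<in> set vs \<Longrightarrow> 0 \<le> nu vs f S u"
  unfolding nu_def by (rule marg_nonneg[OF mono]) auto

lemma nu_le_nu_of_subset_insert_later:
  assumes "S' \<subseteq> insert (vs ! j) S" and "S \<subseteq> set vs" and "i \<le> j" and "j < length vs"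
  shows "nu vs f S (vs ! i) \<le> nu vs f S' (vs ! i)"
proof -
  have i: "i < length vs"
    using assms by simp
  have "vs ! j \<notin> set (take i vs)"
    using nth_in_set_take_iff[OF distinct assms(4)] assms(3) by simp
  then have "S' \<inter> set (take i vs) \<subseteq> S \<inter> set (take i vs)"
    using assms(1) by auto
  moreover have "S \<inter> set (take i vs) \<subseteq> set vs" and "vs ! i \<in> set vs"
    using assms(2) i by auto
  ultimately show ?thesis
    unfolding nu_nth[OF distinct i] by (rule marg_antimono[OF mono submod])
qed

(* Both sides telescope: the new vertex contributes at least marg f S v, and the nu-values of the
   surviving vertices, all earlier than v, can only grow. *)
lemma f_exchange_later_ge:
  assumes S: "S \<subseteq> set (take j vs)" and j: "j < length vs" and C: "C \<subseteq> S"
  shows "f S - (\<Sum>u\<in>C. nu vs f S u) + marg f S (vs ! j) \<le> f (insert (vs ! j) (S - C))"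
proof -
  define v where "v = vs ! j"
  define S' where "S' = insert v (S - C)"
  have S_vs: "S \<subseteq> set vs"
    using S set_take_subset by (rule subset_trans)
  have fin: "finite S"
    using S by (rule finite_subset) simp
  have v_later: "v \<notin> set (take j vs)"
    using nth_in_set_take_iff[OF distinct j] v_def by simp
  have S'_vs: "S' \<subseteq> set vs"
    using S_vs j unfolding S'_def v_def by auto
  have "f S = (\<Sum>u\<in>S. nu vs f S u)"
    using f_eq_sum_nu[OF distinct S_vs, of f] f_empty by simp
  also have "\<dots> = (\<Sum>u\<in>S - C. nu vs f S u) + (\<Sum>u\<in>C. nu vs f S u)"
    by (rule sum.subset_diff[OF C fin])
  finally have f_S: "f S = (\<Sum>u\<in>S - C. nu vs f S u) + (\<Sum>u\<in>C. nu vs f S u)" .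
  have "v \<notin> S - C"
    using S v_later by auto
  then have f_S': "f S' = nu vs f S' v + (\<Sum>u\<in>S - C. nu vs f S' u)"
    using f_eq_sum_nu[OF distinct S'_vs, of f] f_empty fin unfolding S'_def by simp
  have "S' \<inter> set (take j vs) = S - C"
    using S v_later unfolding S'_def by auto
  then have "nu vs f S' v = marg f (S - C) v"
    using nu_nth[OF distinct j] v_def by simp
  moreover have "marg f S v \<le> marg f (S - C) v"
    using S_vs j v_def by (intro marg_antimono[OF mono submod]) auto
  moreover have "(\<Sum>u\<in>S - C. nu vs f S u) \<le> (\<Sum>u\<in>S - C. nu vs f S' u)"
  proof (rule sum_mono)
    fix u
    assume "u \<in> S - C"
    then obtain i where "i < j" and u: "u = vs ! i"
      using S by (auto elim: in_set_take_nth)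
    moreover have "S' \<subseteq> insert (vs ! j) S"
      unfolding S'_def v_def by auto
    ultimately show "nu vs f S u \<le> nu vs f S' u"
      using nu_le_nu_of_subset_insert_later S_vs j by simp
  qed
  ultimately show ?thesis
    using f_S f_S' unfolding S'_def v_def by linarith
qed

definition state :: "nat \<Rightarrow> 'a set" where
  "state j = foldl (pg_step vs E f \<beta>) {} (take j vs)"

definition conflicts :: "nat \<Rightarrow> 'a set" where
  "conflicts j = nbhd E (vs ! j) \<inter> state j"

definition accepts :: "nat \<Rightarrow> bool" where
  "accepts j \<longleftrightarrow> (1 + \<beta>) * (\<Sum>u\<in>conflicts j. nu vs f (state j) u) \<le> marg f (state j) (vs ! j)"

lemma state_0 [simp]: "state 0 = {}"
  by (simp add: state_def)

lemma state_Suc: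
  "j < length vs \<Longrightarrow>
    state (Suc j) = (if accepts j then insert (vs ! j) (state j - conflicts j) else state j)"
  by (simp add: state_def conflicts_def accepts_def take_Suc_conv_app_nth pg_step_def Let_def)

lemma state_Suc_subset: "j < length vs \<Longrightarrow> state (Suc j) \<subseteq> insert (vs ! j) (state j)"
  by (auto simp: state_Suc)

lemma state_subset_take: "j \<le> length vs \<Longrightarrow> state j \<subseteq> set (take j vs)"
proof (induction j)
  case (Suc j)
  then have "state (Suc j) \<subseteq> insert (vs ! j) (state j)" and "state j \<subseteq> set (take j vs)"
    using state_Suc_subset by simp_all
  then have "state (Suc j) \<subseteq> insert (vs ! j) (set (take j vs))"
    by blast
  then show ?case
    using Suc.prems by (simp add: take_Suc_conv_app_nth)
qed simp

lemma state_subset: "j \<le> length vs \<Longrightarrow> state j \<subseteq> set vs"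
  using state_subset_take set_take_subset by (rule subset_trans)

lemma nth_notin_state: "j < length vs \<Longrightarrow> vs ! j \<notin> state j"
  using state_subset_take[of j] nth_in_set_take_iff[OF distinct, of j j] by auto

lemma nth_in_state_Suc_iff: "j < length vs \<Longrightarrow> vs ! j \<in> state (Suc j) \<longleftrightarrow> accepts j"
  using nth_notin_state by (simp add: state_Suc)

lemma state_diff_state_Suc:
  "j < length vs \<Longrightarrow> state j - state (Suc j) = (if accepts j then conflicts j else {})"
  using nth_notin_state by (auto simp: state_Suc conflicts_def)

lemma pg_output_eq: "pg_output vs E f \<beta> = state (length vs)"
  by (simp add: pg_output_def last_pg_states state_def)

lemma pg_union_eq: "pg_union vs E f \<beta> = (\<Union>j\<le>length vs. state j)"
  by (simp add: pg_union_def set_pg_states state_def)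

definition loss :: "nat \<Rightarrow> real" where
  "loss j = (\<Sum>u\<in>state j - state (Suc j). nu vs f (state j) u)"

lemma beta_sum_loss_le: "i \<le> length vs \<Longrightarrow> \<beta> * (\<Sum>j<i. loss j) \<le> f (state i)"
proof (induction i)
  case 0
  then show ?case by (simp add: f_empty)
next
  case (Suc i)
  then have i: "i < length vs" and IH: "\<beta> * (\<Sum>j<i. loss j) \<le> f (state i)"
    by simp_all
  have "f (state i) + \<beta> * loss i \<le> f (state (Suc i))"
  proof (cases "accepts i")
    case True
    have "conflicts i \<subseteq> state i"
      by (simp add: conflicts_def)
    then have "f (state i) - loss i + marg f (state i) (vs ! i) \<le> f (state (Suc i))"
      using f_exchange_later_ge[OF state_subset_take i] True i
      unfolding loss_def state_diff_state_Suc[OF i] by (simp add: state_Suc)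
    moreover have "loss i + \<beta> * loss i \<le> marg f (state i) (vs ! i)"
      using True i by (simp add: accepts_def loss_def state_diff_state_Suc distrib_right)
    ultimately show ?thesis
      by linarith
  next
    case False
    then show ?thesis
      unfolding loss_def state_diff_state_Suc[OF i] by (simp add: state_Suc[OF i])
  qed
  with IH show ?case
    by (simp add: distrib_left)
qed

(* The nu-value of u in the last state containing u, and 0 if u is never selected. *)
definition weight :: "'a \<Rightarrow> real" where
  "weight u = (\<Sum>j<length vs. if u \<in> state j - state (Suc j) then nu vs f (state j) u else 0)
     + (if u \<in> state (length vs) then nu vs f (state (length vs)) u else 0)"

lemma weight_nonneg: "u \<in> set vs \<Longrightarrow> 0 \<le> weight u"
  unfolding weight_def using nu_nonneg state_subset
  by (intro add_nonneg_nonneg sum_nonneg) auto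

lemma nu_state_le_nu_state_Suc:
  assumes "j < length vs" and "u \<in> state j"
  shows "nu vs f (state j) u \<le> nu vs f (state (Suc j)) u"
proof -
  obtain i where "i < j" and "u = vs ! i"
    using assms state_subset_take[of j] by (auto elim: in_set_take_nth)
  then show ?thesis
    using nu_le_nu_of_subset_insert_later[OF state_Suc_subset state_subset] assms by simp
qed

lemma nu_le_weight_removed:
  assumes "j < length vs" and "u \<in> state j - state (Suc j)"
  shows "nu vs f (state j) u \<le> weight u"
proof -
  have u: "u \<in> set vs"
    using assms state_subset[of j] by auto
  have "nu vs f (state j) u
      \<le> (\<Sum>m<length vs. if u \<in> state m - state (Suc m) then nu vs f (state m) u else 0)"
    using member_le_sum[of j "{..<length vs}"
        "\<lambda>m. if u \<in> state m - state (Suc m) then nu vs f (state m) u else 0"]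
      assms nu_nonneg state_subset u
    by auto
  also have "\<dots> \<le> weight u"
    unfolding weight_def using nu_nonneg state_subset u by simp
  finally show ?thesis .
qed

lemma nu_le_weight_final:
  assumes "u \<in> state (length vs)"
  shows "nu vs f (state (length vs)) u \<le> weight u"
proof -
  have "u \<in> set vs"
    using assms state_subset[of "length vs"] by auto
  then have "0 \<le> (\<Sum>m<length vs. if u \<in> state m - state (Suc m) then nu vs f (state m) u else 0)"
    using nu_nonneg state_subset by (intro sum_nonneg) auto
  then show ?thesis
    unfolding weight_def using assms by simp
qed

lemma nu_le_weight:
  assumes "j \<le> length vs" and "u \<in> state j"
  shows "nu vs f (state j) u \<le> weight u"
  using assms
proof (induction j rule: inc_induct)
  case base
  then show ?case
    by (rule nu_le_weight_final)
next
  case (step m)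
  show ?case
  proof (cases "u \<in> state (Suc m)")
    case True
    with step have "nu vs f (state (Suc m)) u \<le> weight u"
      by simp
    with nu_state_le_nu_state_Suc[OF step.hyps(2) step.prems] show ?thesis
      by linarith
  next
    case False
    with step show ?thesis
      by (intro nu_le_weight_removed) auto
  qed
qed

lemma sum_weight: "(\<Sum>u\<in>set vs. weight u) = (\<Sum>j<length vs. loss j) + f (state (length vs))"
proof -
  have removals: "(\<Sum>u\<in>set vs. if u \<in> state j - state (Suc j) then nu vs f (state j) u else 0)
      = loss j" if "j < length vs" for j
  proof -
    have "set vs \<inter> (state j - state (Suc j)) = state j - state (Suc j)"
      using state_subset[of j] that by auto
    then show ?thesis
      using sum.inter_restrict[where A="set vs" and g="nu vs f (state j)"
          and B="state j - state (Suc j)"]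
      by (simp add: loss_def)
  qed
  have last: "(\<Sum>u\<in>set vs. if u \<in> state (length vs) then nu vs f (state (length vs)) u else 0)
      = f (state (length vs))"
  proof -
    have "set vs \<inter> state (length vs) = state (length vs)"
      using state_subset[of "length vs"] by auto
    then show ?thesis
      using sum.inter_restrict[where A="set vs" and g="nu vs f (state (length vs))"
          and B="state (length vs)"]
        f_eq_sum_nu[OF distinct state_subset, of "length vs" f] f_empty
      by simp
  qed
  have "(\<Sum>u\<in>set vs. weight u)
      = (\<Sum>j<length vs. \<Sum>u\<in>set vs. if u \<in> state j - state (Suc j) then nu vs f (state j) u else 0)
        + (\<Sum>u\<in>set vs. if u \<in> state (length vs) then nu vs f (state (length vs)) u else 0)"
    unfolding weight_def sum.distrib by (subst sum.swap) (rule refl)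
  also have "\<dots> = (\<Sum>j<length vs. loss j) + f (state (length vs))"
    using removals last by simp
  finally show ?thesis .
qed

lemma sum_weight_le: "(\<Sum>u\<in>set vs. weight u) \<le> (1 + 1 / \<beta>) * f (state (length vs))"
proof -
  have "(\<Sum>j<length vs. loss j) \<le> f (state (length vs)) / \<beta>"
    using beta_sum_loss_le[of "length vs"] beta_pos by (simp add: pos_le_divide_eq mult.commute)
  then show ?thesis
    unfolding sum_weight by (simp add: distrib_right)
qed

lemma rejected_marg_le:
  assumes j: "j < length vs" and "\<not> accepts j" and "state j \<subseteq> U" and U: "U \<subseteq> set vs"
  shows "marg f U (vs ! j) \<le> (1 + \<beta>) * (\<Sum>u\<in>conflicts j. weight u)"
proof -
  have "marg f U (vs ! j) \<le> marg f (state j) (vs ! j)"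
    using assms by (intro marg_antimono[OF mono submod]) auto
  also have "\<dots> < (1 + \<beta>) * (\<Sum>u\<in>conflicts j. nu vs f (state j) u)"
    using assms(2) unfolding accepts_def by simp
  also have "\<dots> \<le> (1 + \<beta>) * (\<Sum>u\<in>conflicts j. weight u)"
    using beta_pos nu_le_weight j unfolding conflicts_def
    by (intro mult_left_mono sum_mono) auto
  finally show ?thesis
    by simp
qed

lemma card_conflicts_le:
  assumes "simple_graph (set vs) E" and "k_indep_ordering E k vs" and "indep_set E T"
    and "u \<in> set vs"
  shows "card {j. j < length vs \<and> vs ! j \<in> T \<and> u \<in> conflicts j} \<le> k"
proof -
  define J where "J = {j. j < length vs \<and> vs ! j \<in> T \<and> u \<in> conflicts j}"
  obtain i where i: "i < length vs" and u: "u = vs ! i"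
    using assms(4) by (auto simp: in_set_conv_nth)
  have sym: "E a b \<Longrightarrow> E b a" for a b
    using assms(1) unfolding simple_graph_def by blast
  have later_nbhd: "(!) vs ` J \<subseteq> nbhd E (vs ! i) \<inter> set (drop i vs)"
  proof
    fix t
    assume "t \<in> (!) vs ` J"
    then obtain j where j: "j < length vs" and t: "t = vs ! j" and u_j: "u \<in> conflicts j"
      unfolding J_def by auto
    have "E u t"
      using u_j sym unfolding t conflicts_def nbhd_def by simp
    moreover have "u \<in> set (take j vs)"
      using u_j state_subset_take[of j] j unfolding conflicts_def by auto
    then have "i < j"
      using nth_in_set_take_iff[OF distinct i] u by simp
    then have "t = drop i vs ! (j - i)" and "j - i < length (drop i vs)"
      using j t by simp_all
    then have "t \<in> set (drop i vs)"
      by (metis nth_mem)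
    ultimately show "t \<in> nbhd E (vs ! i) \<inter> set (drop i vs)"
      using u by (simp add: nbhd_def)
  qed
  have "indep_set E ((!) vs ` J)"
    using assms(3) unfolding indep_set_def J_def by auto
  with later_nbhd i assms(2) have "card ((!) vs ` J) \<le> k"
    unfolding k_indep_ordering_def by auto
  moreover have "inj_on ((!) vs) J"
    using distinct unfolding J_def by (intro inj_on_nth) auto
  ultimately show ?thesis
    unfolding J_def by (simp add: card_image)
qed

lemma sum_conflicts_weight_le:
  assumes "simple_graph (set vs) E" and "k_indep_ordering E k vs" and "indep_set E T"
    and J: "J \<subseteq> {j. j < length vs \<and> vs ! j \<in> T}"
  shows "(\<Sum>j\<in>J. \<Sum>u\<in>conflicts j. weight u) \<le> k * (\<Sum>u\<in>set vs. weight u)"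
proof (rule sum_sum_le_bounded_multiplicity)
  show "finite J"
    using J by (rule finite_subset) simp
  show "conflicts j \<subseteq> set vs" if "j \<in> J" for j
  proof -
    have "j \<le> length vs"
      using J that by auto
    then show ?thesis
      using state_subset[of j] unfolding conflicts_def by auto
  qed
  show "card {j \<in> J. u \<in> conflicts j} \<le> k" if "u \<in> set vs" for u
  proof -
    have "card {j \<in> J. u \<in> conflicts j}
        \<le> card {j. j < length vs \<and> vs ! j \<in> T \<and> u \<in> conflicts j}"
      using J by (intro card_mono) auto
    with card_conflicts_le[OF assms(1-3) that] show ?thesis
      by linarith
  qed
qed (simp_all add: weight_nonneg)

theorem pg_union_gain_le:
  assumes "simple_graph (set vs) E" and "k_indep_ordering E k vs"
    and "T \<subseteq> set vs" and "indep_set E T"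
  shows "f (pg_union vs E f \<beta> \<union> T) - f (pg_union vs E f \<beta>)
           \<le> real k * (1 + \<beta>) * (1 + 1 / \<beta>) * f (pg_output vs E f \<beta>)"
proof -
  define U where "U = (\<Union>j\<le>length vs. state j)"
  define J where "J = {j. j < length vs \<and> vs ! j \<in> T - U}"
  have U: "U \<subseteq> set vs"
    using state_subset unfolding U_def by auto
  have T_U: "T - U = (!) vs ` J"
    using assms(3) unfolding J_def by (auto simp: image_iff) (metis in_set_conv_nth subsetD)
  have inj: "inj_on ((!) vs) J"
    using distinct unfolding J_def by (intro inj_on_nth) auto
  have state_U: "state j \<subseteq> U" if "j \<le> length vs" for j
    using that unfolding U_def by (intro UN_upper) simp
  have rejected: "\<not> accepts j" if "j \<in> J" for j
    using that nth_in_state_Suc_iff[of j] state_U[of "Suc j"] unfolding J_def by auto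
  have "f (U \<union> T) - f U = f (U \<union> (T - U)) - f U"
    by (simp add: Un_Diff_cancel)
  also have "\<dots> \<le> (\<Sum>t\<in>T - U. marg f U t)"
    using U assms(3) finite_subset[of "T - U" "set vs"]
    by (intro diff_union_le_sum_marg[OF mono submod]) auto
  also have "\<dots> = (\<Sum>j\<in>J. marg f U (vs ! j))"
    unfolding T_U by (simp add: sum.reindex[OF inj])
  also have "\<dots> \<le> (\<Sum>j\<in>J. (1 + \<beta>) * (\<Sum>u\<in>conflicts j. weight u))"
    using rejected state_U U unfolding J_def by (intro sum_mono rejected_marg_le) auto
  also have "\<dots> = (1 + \<beta>) * (\<Sum>j\<in>J. \<Sum>u\<in>conflicts j. weight u)"
    by (simp add: sum_distrib_left)
  also have "\<dots> \<le> (1 + \<beta>) * (k * (\<Sum>u\<in>set vs. weight u))"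
    using sum_conflicts_weight_le[OF assms(1,2,4), of J] beta_pos unfolding J_def
    by (intro mult_left_mono) auto
  also have "\<dots> \<le> (1 + \<beta>) * (k * ((1 + 1 / \<beta>) * f (state (length vs))))"
    using sum_weight_le beta_pos by (intro mult_left_mono) auto
  finally show ?thesis
    unfolding pg_union_eq pg_output_eq U_def[symmetric] by (simp add: ac_simps)
qed

end

theorem lemma16:
  fixes V :: "'a set" and E :: "'a \<Rightarrow> 'a \<Rightarrow> bool" and vs :: "'a list"
    and f :: "'a set \<Rightarrow> real" and k :: nat and \<beta> :: real and T :: "'a set"
  assumes "k \<ge> 1"
    and "distinct vs" and "set vs = V"
    and "simple_graph V E"
    and "k_indep_ordering E k vs"
    and "\<forall>A \<subseteq> V. f A \<ge> 0"
    and "monotone_set_fun V f"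
    and "submodular V f"
    and "f {} = 0"
    and "\<beta> > 0"
    and "T \<subseteq> V" and "indep_set E T"
  shows "f (pg_union vs E f \<beta> \<union> T) - f (pg_union vs E f \<beta>)
           \<le> real k * (1 + \<beta>) * (1 + 1 / \<beta>) * f (pg_output vs E f \<beta>)"
proof -
  interpret preemptive_greedy E vs f \<beta>
    using assms by unfold_locales simp_all
  show ?thesis
    using pg_union_gain_le assms by simp
qed

end
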